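(* Let $m\ge7$ and $d\ge2$, and let $J$ be a set of jobs with size vectors $p_j\in\mathbb{R}^d_{\ge0}$ satisfying $p_{j,r}\in[0,1]$ for all $j\in J,r\in[d]$ and $\sum_{j\in J}p_{j,r}\le m\log d$ for all $r\in[d]$. Consider a random job set $S\subseteq J$ in which each job $j\in J$ is independently included with probability $q:=7/m$. Then with probability at least $1/2$, for all $r\in[d]$ we have $\sum_{j\in S}p_{j,r}\le14\log d$ and $\sum_{j\in J\setminus S}p_{j,r}\le(m-1)\log d$. *)

theory Defs
  imports "HOL-Probability.Probability"
begin

end

theory Submission
  imports Defs
begin

text \<open>
  For a fixed coordinate r let X be the load of the random set S. Its exponential moments satisfy
  E exp (s X) \<le> exp (q (e^s - 1) T), where T = \<Sum>j\<in>J. p j r \<le> m log d and q T \<le> 7 log d.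
  Chernoff with s = ln 2 gives P (X > 14 log d) \<le> d^(7 - 14 ln 2); since the load of J - S is
  T - X, Chernoff for the lower tail of X with s = ln 7 gives
  P (T - X > (m - 1) log d) \<le> d^(ln 7 - 6). A union bound over the d coordinates leaves a
  failure probability of at most d^(8 - 14 ln 2) + d^(ln 7 - 5) \<le> 10/27 + 1/8 < 1/2.
\<close>

lemma exp_mult_le_chord:
  fixes s w :: real
  assumes "0 \<le> w" "w \<le> 1"
  shows "exp (s * w) \<le> 1 - w + w * exp s"
  using convex_onD[OF exp_convex, of w 0 s] assms by (simp add: mult.commute)

lemma expectation_exp_sum_Pi_bernoulli_le:
  fixes J :: "'j set" and w :: "'j \<Rightarrow> real" and q s :: real
  assumes "finite J" and "0 \<le> q" "q \<le> 1"
    and w: "\<And>j. j \<in> J \<Longrightarrow> 0 \<le> w j \<and> w j \<le> 1"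
  shows "measure_pmf.expectation (Pi_pmf J False (\<lambda>_. bernoulli_pmf q))
           (\<lambda>b. exp (s * (\<Sum>j\<in>{j\<in>J. b j}. w j)))
         \<le> exp (q * (exp s - 1) * (\<Sum>j\<in>J. w j))"
proof -
  have exp_sum_eq: "exp (s * (\<Sum>j\<in>{j\<in>J. b j}. w j)) = (\<Prod>j\<in>J. if b j then exp (s * w j) else 1)"
    for b
    using \<open>finite J\<close>
    by (simp add: sum.inter_filter sum_distrib_left exp_sum if_distrib cong: if_cong)
  have "measure_pmf.expectation (Pi_pmf J False (\<lambda>_. bernoulli_pmf q))
          (\<lambda>b. exp (s * (\<Sum>j\<in>{j\<in>J. b j}. w j)))
        = (\<Prod>j\<in>J. measure_pmf.expectation (bernoulli_pmf q) (\<lambda>v. if v then exp (s * w j) else 1))"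
    unfolding exp_sum_eq
    by (rule expectation_prod_Pi_pmf[OF \<open>finite J\<close>, where f = "\<lambda>j v. if v then exp (s * w j) else 1"])
       (auto intro!: integrable_measure_pmf_finite)
  also have "\<dots> = (\<Prod>j\<in>J. 1 + q * (exp (s * w j) - 1))"
    using assms(2,3) by (simp add: algebra_simps)
  also have "\<dots> \<le> (\<Prod>j\<in>J. exp (q * (exp s - 1) * w j))"
  proof (rule prod_mono)
    fix j assume "j \<in> J"
    have "q * (exp (s * w j) - 1) \<le> q * ((exp s - 1) * w j)"
      using exp_mult_le_chord[of "w j" s] w[OF \<open>j \<in> J\<close>] assms(2)
      by (intro mult_left_mono) (auto simp: algebra_simps)
    moreover have "1 + q * ((exp s - 1) * w j) \<le> exp (q * (exp s - 1) * w j)"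
      using exp_ge_add_one_self[of "q * (exp s - 1) * w j"] by (simp only: mult.assoc)
    moreover have "0 \<le> 1 + q * (exp (s * w j) - 1)"
      using assms(2,3) by (simp add: algebra_simps add_increasing2)
    ultimately show "0 \<le> 1 + q * (exp (s * w j) - 1)
        \<and> 1 + q * (exp (s * w j) - 1) \<le> exp (q * (exp s - 1) * w j)"
      by linarith
  qed
  also have "\<dots> = exp (q * (exp s - 1) * (\<Sum>j\<in>J. w j))"
    using \<open>finite J\<close> by (simp add: exp_sum sum_distrib_left)
  finally show ?thesis .
qed

lemma finite_set_pmf_Pi_pmf:
  assumes "finite A" and "\<And>x. x \<in> A \<Longrightarrow> finite (set_pmf (p x))"
  shows "finite (set_pmf (Pi_pmf A dflt p))"
  using assms by (subst set_Pi_pmf) auto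

lemma Chernoff_Pi_bernoulli_sum_ge:
  fixes J :: "'j set" and w :: "'j \<Rightarrow> real" and q s a :: real
  assumes "finite J" and "0 \<le> q" "q \<le> 1" and "s > 0"
    and "\<And>j. j \<in> J \<Longrightarrow> 0 \<le> w j \<and> w j \<le> 1"
  shows "measure_pmf.prob (Pi_pmf J False (\<lambda>_. bernoulli_pmf q)) {b. a \<le> (\<Sum>j\<in>{j\<in>J. b j}. w j)}
         \<le> exp (q * (exp s - 1) * (\<Sum>j\<in>J. w j) - s * a)"
proof -
  let ?M = "Pi_pmf J False (\<lambda>_. bernoulli_pmf q)"
  have fin: "finite (set_pmf ?M)"
    using \<open>finite J\<close> by (rule finite_set_pmf_Pi_pmf) simp
  have "measure_pmf.prob ?M {b. a \<le> (\<Sum>j\<in>{j\<in>J. b j}. w j)}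
        \<le> exp (- s * a) * measure_pmf.expectation ?M (\<lambda>b. exp (s * (\<Sum>j\<in>{j\<in>J. b j}. w j)))"
    using measure_pmf.Chernoff_ineq_ge[OF \<open>s > 0\<close>, of ?M UNIV "\<lambda>b. \<Sum>j\<in>{j\<in>J. b j}. w j" a]
    by (simp add: set_integrable_def set_integral_space[of ?M, simplified] integrable_measure_pmf_finite[OF fin])
  also have "\<dots> \<le> exp (- s * a) * exp (q * (exp s - 1) * (\<Sum>j\<in>J. w j))"
    by (intro mult_left_mono expectation_exp_sum_Pi_bernoulli_le assms) auto
  finally show ?thesis
    by (simp add: exp_add [symmetric])
qed

lemma Chernoff_Pi_bernoulli_sum_le:
  fixes J :: "'j set" and w :: "'j \<Rightarrow> real" and q s a :: real
  assumes "finite J" and "0 \<le> q" "q \<le> 1" and "s > 0"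
    and "\<And>j. j \<in> J \<Longrightarrow> 0 \<le> w j \<and> w j \<le> 1"
  shows "measure_pmf.prob (Pi_pmf J False (\<lambda>_. bernoulli_pmf q)) {b. (\<Sum>j\<in>{j\<in>J. b j}. w j) \<le> a}
         \<le> exp (q * (exp (- s) - 1) * (\<Sum>j\<in>J. w j) + s * a)"
proof -
  let ?M = "Pi_pmf J False (\<lambda>_. bernoulli_pmf q)"
  have fin: "finite (set_pmf ?M)"
    using \<open>finite J\<close> by (rule finite_set_pmf_Pi_pmf) simp
  have "measure_pmf.prob ?M {b. (\<Sum>j\<in>{j\<in>J. b j}. w j) \<le> a}
        \<le> exp (s * a) * measure_pmf.expectation ?M (\<lambda>b. exp (- s * (\<Sum>j\<in>{j\<in>J. b j}. w j)))"
    using measure_pmf.Chernoff_ineq_le[OF \<open>s > 0\<close>, of ?M UNIV "\<lambda>b. \<Sum>j\<in>{j\<in>J. b j}. w j" a]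
    by (simp add: set_integrable_def set_integral_space[of ?M, simplified] integrable_measure_pmf_finite[OF fin])
  also have "\<dots> \<le> exp (s * a) * exp (q * (exp (- s) - 1) * (\<Sum>j\<in>J. w j))"
    by (intro mult_left_mono expectation_exp_sum_Pi_bernoulli_le assms) auto
  finally show ?thesis
    by (simp add: exp_add [symmetric] add.commute)
qed

lemma prob_Pi_bernoulli_sum_gt_twice_mean_le:
  fixes J :: "'j set" and w :: "'j \<Rightarrow> real" and q \<mu> :: real
  assumes "finite J" and "0 \<le> q" "q \<le> 1"
    and "\<And>j. j \<in> J \<Longrightarrow> 0 \<le> w j \<and> w j \<le> 1"
    and mean: "q * (\<Sum>j\<in>J. w j) \<le> \<mu>"
  shows "measure_pmf.prob (Pi_pmf J False (\<lambda>_. bernoulli_pmf q)) {b. 2 * \<mu> < (\<Sum>j\<in>{j\<in>J. b j}. w j)}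
         \<le> exp (- (2 * ln 2 - 1) * \<mu>)"
proof -
  let ?M = "Pi_pmf J False (\<lambda>_. bernoulli_pmf q)"
  have "measure_pmf.prob ?M {b. 2 * \<mu> < (\<Sum>j\<in>{j\<in>J. b j}. w j)}
        \<le> measure_pmf.prob ?M {b. 2 * \<mu> \<le> (\<Sum>j\<in>{j\<in>J. b j}. w j)}"
    by (intro measure_pmf.finite_measure_mono) auto
  also have "\<dots> \<le> exp (q * (exp (ln 2) - 1) * (\<Sum>j\<in>J. w j) - ln 2 * (2 * \<mu>))"
    by (intro Chernoff_Pi_bernoulli_sum_ge assms) auto
  also have "\<dots> \<le> exp (- (2 * ln 2 - 1) * \<mu>)"
    using mean by (simp add: algebra_simps)
  finally show ?thesis .
qed

lemma prob_Pi_bernoulli_unselected_sum_gt_le: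
  fixes J :: "'j set" and w :: "'j \<Rightarrow> real" and m L :: real
  assumes "finite J" and "m \<ge> 7"
    and "\<And>j. j \<in> J \<Longrightarrow> 0 \<le> w j \<and> w j \<le> 1"
    and total: "(\<Sum>j\<in>J. w j) \<le> m * L"
  shows "measure_pmf.prob (Pi_pmf J False (\<lambda>_. bernoulli_pmf (7 / m)))
           {b. (m - 1) * L < (\<Sum>j\<in>J - {j\<in>J. b j}. w j)}
         \<le> exp (- (6 - ln 7) * L)"
proof -
  let ?M = "Pi_pmf J False (\<lambda>_. bernoulli_pmf (7 / m))"
  define T where "T = (\<Sum>j\<in>J. w j)"
  have "measure_pmf.prob ?M {b. (m - 1) * L < (\<Sum>j\<in>J - {j\<in>J. b j}. w j)}
        \<le> measure_pmf.prob ?M {b. (\<Sum>j\<in>{j\<in>J. b j}. w j) \<le> T - (m - 1) * L}"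
    using \<open>finite J\<close> by (intro measure_pmf.finite_measure_mono) (auto simp: T_def sum_diff)
  also have "\<dots> \<le> exp (7 / m * (exp (- ln 7) - 1) * T + ln 7 * (T - (m - 1) * L))"
    unfolding T_def using \<open>m \<ge> 7\<close> by (intro Chernoff_Pi_bernoulli_sum_le assms) auto
  also have "7 / m * (exp (- ln 7) - 1) * T + ln 7 * (T - (m - 1) * L)
             = (ln 7 - 6 / m) * T - ln 7 * (m - 1) * L"
    using \<open>m \<ge> 7\<close> by (simp add: exp_minus field_simps)
  also have "(ln 7 - 6 / m) * T \<le> (ln 7 - 6 / m) * (m * L)"
  proof (rule mult_left_mono)
    have "6 / m \<le> 1"
      using \<open>m \<ge> 7\<close> by simp
    moreover have "1 < ln (7::real)"
      using ln3_gt_1 ln_less_cancel_iff[of 3 7] by linarith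
    ultimately show "0 \<le> ln 7 - 6 / m" by simp
  qed (use total in \<open>simp add: T_def\<close>)
  also have "(ln 7 - 6 / m) * (m * L) - ln 7 * (m - 1) * L = - (6 - ln 7) * L"
    using \<open>m \<ge> 7\<close> by (simp add: field_simps)
  finally show ?thesis by simp
qed

lemma prob_Pi_bernoulli_overloaded_le:
  fixes J :: "'j set" and w :: "'j \<Rightarrow> real" and m L :: real
  assumes "finite J" and "m \<ge> 7"
    and "\<And>j. j \<in> J \<Longrightarrow> 0 \<le> w j \<and> w j \<le> 1"
    and total: "(\<Sum>j\<in>J. w j) \<le> m * L"
  shows "measure_pmf.prob (Pi_pmf J False (\<lambda>_. bernoulli_pmf (7 / m)))
           {b. \<not> ((\<Sum>j\<in>{j\<in>J. b j}. w j) \<le> 14 * L \<and> (\<Sum>j\<in>J - {j\<in>J. b j}. w j) \<le> (m - 1) * L)}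
         \<le> exp (- (14 * ln 2 - 7) * L) + exp (- (6 - ln 7) * L)"
proof -
  let ?M = "Pi_pmf J False (\<lambda>_. bernoulli_pmf (7 / m))"
  let ?heavy = "{b. 2 * (7 * L) < (\<Sum>j\<in>{j\<in>J. b j}. w j)}"
  let ?rest_heavy = "{b. (m - 1) * L < (\<Sum>j\<in>J - {j\<in>J. b j}. w j)}"
  have "7 / m * (\<Sum>j\<in>J. w j) \<le> 7 / m * (m * L)"
    using total \<open>m \<ge> 7\<close> by (intro mult_left_mono) auto
  then have "measure_pmf.prob ?M ?heavy \<le> exp (- (2 * ln 2 - 1) * (7 * L))"
    using assms by (intro prob_Pi_bernoulli_sum_gt_twice_mean_le) auto
  moreover have "measure_pmf.prob ?M ?rest_heavy \<le> exp (- (6 - ln 7) * L)"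
    using assms by (rule prob_Pi_bernoulli_unselected_sum_gt_le)
  moreover have "measure_pmf.prob ?M
      {b. \<not> ((\<Sum>j\<in>{j\<in>J. b j}. w j) \<le> 14 * L \<and> (\<Sum>j\<in>J - {j\<in>J. b j}. w j) \<le> (m - 1) * L)}
      \<le> measure_pmf.prob ?M ?heavy + measure_pmf.prob ?M ?rest_heavy"
    by (rule order_trans[OF measure_pmf.finite_measure_mono measure_Un_le]) auto
  ultimately show ?thesis by (simp add: algebra_simps)
qed

lemma mult_exp_mult_ln_le_powr:
  fixes a c d :: real
  assumes "0 < a" and "a \<le> d" and "c \<le> -1"
  shows "d * exp (c * ln d) \<le> a powr (c + 1)"
proof -
  have "d * exp (c * ln d) = d powr (c + 1)"
    using assms(1,2) by (simp add: powr_add powr_def exp_add distrib_right)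
  also have "\<dots> \<le> a powr (c + 1)"
    using assms by (intro powr_mono2') auto
  finally show ?thesis .
qed

lemma dimension_times_tail_bounds_le_half:
  fixes d :: real
  assumes "2 \<le> d"
  shows "d * (exp (- (14 * ln 2 - 7) * ln d) + exp (- (6 - ln 7) * ln d)) \<le> 1 / 2"
proof -
  have e: "27 / 10 \<le> exp (1::real)"
    using e_approx_32 by (simp add: abs_if split: if_splits)
  have ln2: "56 / 81 \<le> ln (2::real)"
    using ln_approx_bounds[of 2 2] by (simp add: eval_nat_numeral)
  have ln7: "ln 7 \<le> (2::real)"
  proof -
    have "(7::real) \<le> (27 / 10) ^ 2" by (simp add: power2_eq_square)
    also have "\<dots> \<le> exp 1 ^ 2" using e by (intro power_mono) auto
    also have "\<dots> = exp 2" by (simp flip: exp_of_nat_mult)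
    finally show ?thesis using ln_le_cancel_iff[of 7 "exp 2"] by simp
  qed
  have "d * exp (- (14 * ln 2 - 7) * ln d) \<le> 2 powr (8 - 14 * ln 2)"
    using mult_exp_mult_ln_le_powr[OF _ assms, of "- (14 * ln 2 - 7)"] ln2 by simp
  also have "\<dots> = exp ((8 - 14 * ln 2) * ln 2)"
    by (simp add: powr_def)
  also have "\<dots> \<le> exp (- 1)"
  proof -
    have "(8 - 14 * ln 2) * ln 2 \<le> (8 - 14 * (56 / 81)) * ln (2::real)"
      using ln2 by (intro mult_right_mono) auto
    also have "\<dots> \<le> (8 - 14 * (56 / 81)) * (56 / 81)"
      using ln2 by (intro mult_left_mono_neg) auto
    finally show ?thesis by simp
  qed
  also have "\<dots> \<le> 10 / 27"
    using e by (simp add: exp_minus field_simps)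
  finally have heavy: "d * exp (- (14 * ln 2 - 7) * ln d) \<le> 10 / 27" .
  have "d * exp (- (6 - ln 7) * ln d) \<le> 2 powr (ln 7 - 5)"
    using mult_exp_mult_ln_le_powr[OF _ assms, of "- (6 - ln 7)"] ln7 by simp
  also have "\<dots> \<le> 2 powr (- 3)"
    using ln7 by (intro powr_mono) auto
  finally have light: "d * exp (- (6 - ln 7) * ln d) \<le> 1 / 8"
    by (simp add: powr_minus_divide)
  show ?thesis
    using heavy light by (simp add: distrib_left)
qed

lemma measure_pmf_prob_Ball_ge:
  fixes M :: "'a pmf" and P :: "'r \<Rightarrow> 'a \<Rightarrow> bool"
  assumes "finite R"
  shows "measure_pmf.prob M {x. \<forall>r\<in>R. P r x} \<ge> 1 - (\<Sum>r\<in>R. measure_pmf.prob M {x. \<not> P r x})"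
proof -
  have "measure_pmf.prob M (UNIV - {x. \<forall>r\<in>R. P r x}) = measure_pmf.prob M (\<Union>r\<in>R. {x. \<not> P r x})"
    by (rule arg_cong[where f = "measure_pmf.prob M"]) blast
  also have "\<dots> \<le> (\<Sum>r\<in>R. measure_pmf.prob M {x. \<not> P r x})"
    using assms by (intro measure_pmf.finite_measure_subadditive_finite) auto
  finally show ?thesis
    using measure_pmf.prob_compl[of "{x. \<forall>r\<in>R. P r x}" M] by simp
qed

theorem lemma6:
  fixes J :: "'j set" and p :: "'j \<Rightarrow> nat \<Rightarrow> real" and m d :: nat
  assumes "m \<ge> 7" and "d \<ge> 2" and "finite J"
    and "\<And>j r. j \<in> J \<Longrightarrow> r \<in> {1..d} \<Longrightarrow> 0 \<le> p j r \<and> p j r \<le> 1"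
    and "\<And>r. r \<in> {1..d} \<Longrightarrow> (\<Sum>j\<in>J. p j r) \<le> real m * ln (real d)"
  shows "measure_pmf.prob (Pi_pmf J False (\<lambda>_. bernoulli_pmf (7 / real m)))
           {b. \<forall>r\<in>{1..d}. (\<Sum>j\<in>{j\<in>J. b j}. p j r) \<le> 14 * ln (real d)
                          \<and> (\<Sum>j\<in>J - {j\<in>J. b j}. p j r) \<le> (real m - 1) * ln (real d)}
         \<ge> 1 / 2"
proof -
  let ?M = "Pi_pmf J False (\<lambda>_. bernoulli_pmf (7 / real m))"
  let ?L = "ln (real d)"
  let ?good = "\<lambda>r b. (\<Sum>j\<in>{j\<in>J. b j}. p j r) \<le> 14 * ?L
                       \<and> (\<Sum>j\<in>J - {j\<in>J. b j}. p j r) \<le> (real m - 1) * ?L"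
  let ?\<epsilon> = "exp (- (14 * ln 2 - 7) * ?L) + exp (- (6 - ln 7) * ?L)"
  have bad_le: "measure_pmf.prob ?M {b. \<not> ?good r b} \<le> ?\<epsilon>" if "r \<in> {1..d}" for r
    using assms that by (intro prob_Pi_bernoulli_overloaded_le) auto
  have "1 / 2 \<le> 1 - real d * ?\<epsilon>"
    using dimension_times_tail_bounds_le_half[of "real d"] assms(2) by simp
  also have "\<dots> \<le> 1 - (\<Sum>r\<in>{1..d}. measure_pmf.prob ?M {b. \<not> ?good r b})"
    using sum_mono[of "{1..d}", OF bad_le] by simp
  also have "\<dots> \<le> measure_pmf.prob ?M {b. \<forall>r\<in>{1..d}. ?good r b}"
    by (rule measure_pmf_prob_Ball_ge) simp
  finally show ?thesis .
qed

end
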